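(* Let $H$ be a connected graph, $G_n$ a graph with $N(H,G_n)>0$, $p_n\in(0,1)$, and $\varepsilon>0$. Define $$M_n=\sum_{\substack{A\subset V(G_n)\\1\le|A|\le|V(H)|}}t_H(A)\,\mathbf 1\{t_H(A)>\varepsilon p_n^{|A|}N(H,G_n)\}.$$ Then (a) $\frac{M_n}{2^{|V(H)|}-1}\le N(H,G_n)-N_\varepsilon^+(H,G_n)\le M_n$, and (b) $\mathbb P(T(H,G_n)\ne T_\varepsilon^+(H,G_n))\le\frac{M_n}{\varepsilon N(H,G_n)}$.
   Context: $G_n$ is a simple labeled graph on $V(G_n)=\{1,\dots,|V(G_n)|\}$ with adjacency $(a_{ij})$; $H=(V(H),E(H))$ with $|Aut(H)|$ automorphisms. $V(G_n)_k$ is the set of $k$-tuples of distinct vertices, $\bar{\mathbf s}$ the set of entries. $M_H(\mathbf s)=\prod_{(i,j)\in E(H)}a_{s_is_j}$, $N(H,G_n)=\frac1{|Aut(H)|}\sum_{\mathbf s\in V(G_n)_{|V(H)|}}M_H(\mathbf s)$, $t_H(A)=\frac1{|Aut(H)|}\sum_{\mathbf s:\bar{\mathbf s}\supseteq A}M_H(\mathbf s)$. $\{X_v\}$ i.i.d. Bernoulli$(p_n)$, $X_{\mathbf s}=\prod_uX_{s_u}$, $T(H,G_n)=\frac1{|Aut(H)|}\sum_{\mathbf s}M_H(\mathbf s)X_{\mathbf s}$. For $\mathbf s\in V(G_n)_{|V(H)|}$ let $b_\varepsilon(\mathbf s)=1$ if $t_H(A)\le\varepsilon p_n^{|A|}N(H,G_n)$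 for every nonempty $A\subseteq\bar{\mathbf s}$, and $b_\varepsilon(\mathbf s)=0$ otherwise. Set $T_\varepsilon^+(H,G_n)=\frac1{|Aut(H)|}\sum_{\mathbf s}M_H(\mathbf s)X_{\mathbf s}b_\varepsilon(\mathbf s)$ and $N_\varepsilon^+(H,G_n)=p_n^{-|V(H)|}\mathbb E[T_\varepsilon^+(H,G_n)]$. *)

theory Defs
  imports "HOL-Probability.Probability"
begin

(* H: simple graph on vertex set {0..<k}, adjacency adjH (symmetric, irreflexive).
   G_n: simple graph on vertex set {1..n}, adjacency aG (symmetric, irreflexive). *)

definition simple_graph_on :: "nat set \<Rightarrow> (nat \<Rightarrow> nat \<Rightarrow> bool) \<Rightarrow> bool" where
  "simple_graph_on V adj \<longleftrightarrow>
     (\<forall>x y. adj x y \<longrightarrow> x \<in> V \<and> y \<in> V) \<and> (\<forall>x y. adj x y \<longrightarrow> adj y x) \<and> (\<forall>x. \<not> adj x x)"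

definition connected_graph :: "nat \<Rightarrow> (nat \<Rightarrow> nat \<Rightarrow> bool) \<Rightarrow> bool" where
  "connected_graph k adjH \<longleftrightarrow> k \<ge> 1 \<and>
     (\<forall>u<k. \<forall>v<k. (\<lambda>x y. adjH x y \<and> x < k \<and> y < k)\<^sup>*\<^sup>* u v)"

definition edgesH :: "nat \<Rightarrow> (nat \<Rightarrow> nat \<Rightarrow> bool) \<Rightarrow> (nat \<times> nat) set" where
  "edgesH k adjH = {(i,j). i < j \<and> j < k \<and> adjH i j}"

definition autH :: "nat \<Rightarrow> (nat \<Rightarrow> nat \<Rightarrow> bool) \<Rightarrow> (nat \<Rightarrow> nat) set" where
  "autH k adjH = {\<sigma> \<in> {0..<k} \<rightarrow>\<^sub>E {0..<k}. bij_betw \<sigma> {0..<k} {0..<k} \<and>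
      (\<forall>i<k. \<forall>j<k. adjH i j \<longleftrightarrow> adjH (\<sigma> i) (\<sigma> j))}"

(* V(G_n)_k: k-tuples of distinct vertices, as injective maps {0..<k} -> {1..n} *)
definition tuples :: "nat \<Rightarrow> nat \<Rightarrow> (nat \<Rightarrow> nat) set" where
  "tuples n k = {s \<in> {0..<k} \<rightarrow>\<^sub>E {1..n}. inj_on s {0..<k}}"

definition adjm :: "(nat \<Rightarrow> nat \<Rightarrow> bool) \<Rightarrow> nat \<Rightarrow> nat \<Rightarrow> real" where
  "adjm aG i j = (if aG i j then 1 else 0)"

definition MH :: "nat \<Rightarrow> (nat \<Rightarrow> nat \<Rightarrow> bool) \<Rightarrow> (nat \<Rightarrow> nat \<Rightarrow> bool) \<Rightarrow> (nat \<Rightarrow> nat) \<Rightarrow> real" where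
  "MH k adjH aG s = (\<Prod>(i,j)\<in>edgesH k adjH. adjm aG (s i) (s j))"

definition NHG :: "nat \<Rightarrow> (nat \<Rightarrow> nat \<Rightarrow> bool) \<Rightarrow> nat \<Rightarrow> (nat \<Rightarrow> nat \<Rightarrow> bool) \<Rightarrow> real" where
  "NHG k adjH n aG = (1 / real (card (autH k adjH))) * (\<Sum>s\<in>tuples n k. MH k adjH aG s)"

definition tH :: "nat \<Rightarrow> (nat \<Rightarrow> nat \<Rightarrow> bool) \<Rightarrow> nat \<Rightarrow> (nat \<Rightarrow> nat \<Rightarrow> bool) \<Rightarrow> nat set \<Rightarrow> real" where
  "tH k adjH n aG A = (1 / real (card (autH k adjH))) *
     (\<Sum>s\<in>{s \<in> tuples n k. A \<subseteq> s ` {0..<k}}. MH k adjH aG s)"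

definition Xs :: "nat \<Rightarrow> (nat \<Rightarrow> bool) \<Rightarrow> (nat \<Rightarrow> nat) \<Rightarrow> real" where
  "Xs k X s = (\<Prod>u<k. if X (s u) then 1 else 0)"

definition THG :: "nat \<Rightarrow> (nat \<Rightarrow> nat \<Rightarrow> bool) \<Rightarrow> nat \<Rightarrow> (nat \<Rightarrow> nat \<Rightarrow> bool) \<Rightarrow> (nat \<Rightarrow> bool) \<Rightarrow> real" where
  "THG k adjH n aG X = (1 / real (card (autH k adjH))) * (\<Sum>s\<in>tuples n k. MH k adjH aG s * Xs k X s)"

definition b_eps :: "nat \<Rightarrow> (nat \<Rightarrow> nat \<Rightarrow> bool) \<Rightarrow> nat \<Rightarrow> (nat \<Rightarrow> nat \<Rightarrow> bool) \<Rightarrow> real \<Rightarrow> real \<Rightarrow> (nat \<Rightarrow> nat) \<Rightarrow> real" where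
  "b_eps k adjH n aG p \<epsilon> s = (if \<forall>A. A \<subseteq> s ` {0..<k} \<and> A \<noteq> {} \<longrightarrow>
       tH k adjH n aG A \<le> \<epsilon> * p ^ card A * NHG k adjH n aG then 1 else 0)"

definition Tplus :: "nat \<Rightarrow> (nat \<Rightarrow> nat \<Rightarrow> bool) \<Rightarrow> nat \<Rightarrow> (nat \<Rightarrow> nat \<Rightarrow> bool) \<Rightarrow> real \<Rightarrow> real \<Rightarrow> (nat \<Rightarrow> bool) \<Rightarrow> real" where
  "Tplus k adjH n aG p \<epsilon> X = (1 / real (card (autH k adjH))) *
     (\<Sum>s\<in>tuples n k. MH k adjH aG s * Xs k X s * b_eps k adjH n aG p \<epsilon> s)"

definition Xlaw :: "nat \<Rightarrow> real \<Rightarrow> (nat \<Rightarrow> bool) pmf" where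
  "Xlaw n p = Pi_pmf {1..n} False (\<lambda>_. bernoulli_pmf p)"

definition Nplus :: "nat \<Rightarrow> (nat \<Rightarrow> nat \<Rightarrow> bool) \<Rightarrow> nat \<Rightarrow> (nat \<Rightarrow> nat \<Rightarrow> bool) \<Rightarrow> real \<Rightarrow> real \<Rightarrow> real" where
  "Nplus k adjH n aG p \<epsilon> = (1 / p ^ k) *
     measure_pmf.expectation (Xlaw n p) (Tplus k adjH n aG p \<epsilon>)"

definition Mn :: "nat \<Rightarrow> (nat \<Rightarrow> nat \<Rightarrow> bool) \<Rightarrow> nat \<Rightarrow> (nat \<Rightarrow> nat \<Rightarrow> bool) \<Rightarrow> real \<Rightarrow> real \<Rightarrow> real" where
  "Mn k adjH n aG p \<epsilon> = (\<Sum>A\<in>{A. A \<subseteq> {1..n} \<and> 1 \<le> card A \<and> card A \<le> k}.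
      tH k adjH n aG A * (if tH k adjH n aG A > \<epsilon> * p ^ card A * NHG k adjH n aG then 1 else 0))"

end

theory Submission
  imports Defs
begin

(* Call a vertex set A heavy if 1 \<le> |A| \<le> |V(H)| and
   t_H(A) > \<epsilon> p^|A| N(H,G_n). A copy s of H is dropped from T^+ exactly when its vertex set
   contains a heavy set, and it contains at most 2^|V(H)| - 1 of them. Counting the copies
   through each heavy set, M_n is the sum over copies of M_H(s) times the number of heavy
   subsets of s, while N - N^+ is the sum over the dropped copies of M_H(s); this gives (a).
   For (b), T and T^+ can only differ if all vertices of some heavy set A are present,
   which has probability p^|A| < t_H(A) / (\<epsilon> N), and a union bound over heavy sets
   gives M_n / (\<epsilon> N). *)

lemma finite_set_pmf_Pi_pmf_bernoulli:
  "finite I \<Longrightarrow> finite (set_pmf (Pi_pmf I dflt (\<lambda>_. bernoulli_pmf p)))"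
  by (subst set_Pi_pmf) auto

lemma prob_Pi_pmf_bernoulli_all_True:
  assumes "finite I" "B \<subseteq> I" "0 \<le> p" "p \<le> 1"
  shows "measure_pmf.prob (Pi_pmf I dflt (\<lambda>_. bernoulli_pmf p)) {X. \<forall>v\<in>B. X v}
    = p ^ card B"
proof -
  have "{X. \<forall>v\<in>B. X v} = Pi I (\<lambda>v. if v \<in> B then {True} else UNIV)"
    using assms(2) by (force simp: Pi_iff)
  then have "measure_pmf.prob (Pi_pmf I dflt (\<lambda>_. bernoulli_pmf p)) {X. \<forall>v\<in>B. X v}
      = (\<Prod>v\<in>I. measure_pmf.prob (bernoulli_pmf p) (if v \<in> B then {True} else UNIV))"
    using assms(1) by (simp add: measure_Pi_pmf_Pi)
  also have "\<dots> = (\<Prod>v\<in>I. if v \<in> B then p else 1)"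
    using assms(3,4) by (intro prod.cong) (auto simp: measure_pmf_single)
  also have "\<dots> = p ^ card B"
    using assms(1,2) by (simp add: prod.If_cases Int_absorb1)
  finally show ?thesis .
qed

lemma Xs_eq_indicator: "Xs k X s = indicator {X. \<forall>u<k. X (s u)} X"
  by (induction k) (auto simp: Xs_def indicator_def less_Suc_eq)

lemma expectation_Xs:
  assumes "s \<in> tuples n k" "0 \<le> p" "p \<le> 1"
  shows "measure_pmf.expectation (Xlaw n p) (\<lambda>X. Xs k X s) = p ^ k"
proof -
  have s: "s ` {0..<k} \<subseteq> {1..n}" "inj_on s {0..<k}"
    using assms(1) by (auto simp: tuples_def)
  have "{X. \<forall>u<k. X (s u)} = {X. \<forall>v\<in>s ` {0..<k}. X v}"
    by auto
  then have "measure_pmf.expectation (Xlaw n p) (\<lambda>X. Xs k X s)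
      = measure_pmf.prob (Xlaw n p) {X. \<forall>v\<in>s ` {0..<k}. X v}"
    by (simp add: Xs_eq_indicator)
  also have "\<dots> = p ^ card (s ` {0..<k})"
    unfolding Xlaw_def using s(1) assms(2,3) by (intro prob_Pi_pmf_bernoulli_all_True) auto
  finally show ?thesis
    using s(2) by (simp add: card_image)
qed

lemma card_nonempty_subsets_le:
  assumes "finite S"
  shows "card {A. A \<subseteq> S \<and> A \<noteq> {} \<and> P A} \<le> 2 ^ card S - 1"
proof -
  have "card {A. A \<subseteq> S \<and> A \<noteq> {} \<and> P A} \<le> card (Pow S - {{}})"
    using assms by (intro card_mono) auto
  also have "\<dots> = 2 ^ card S - 1"
    using assms by (simp add: card_Pow)
  finally show ?thesis .
qed

lemma finite_tuples: "finite (tuples n k)"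
  unfolding tuples_def
  by (rule finite_subset[of _ "{0..<k} \<rightarrow>\<^sub>E {1..n}"]) (auto intro: finite_PiE)

lemma MH_nonneg: "0 \<le> MH k adjH aG s"
  unfolding MH_def adjm_def by (intro prod_nonneg) (auto split: prod.splits)

definition heavy_sets ::
    "nat \<Rightarrow> (nat \<Rightarrow> nat \<Rightarrow> bool) \<Rightarrow> nat \<Rightarrow> (nat \<Rightarrow> nat \<Rightarrow> bool) \<Rightarrow> real \<Rightarrow> real \<Rightarrow> nat set set"
  where
  "heavy_sets k adjH n aG p \<epsilon> = {A. A \<subseteq> {1..n} \<and> 1 \<le> card A \<and> card A \<le> k \<and>
      \<epsilon> * p ^ card A * NHG k adjH n aG < tH k adjH n aG A}"

lemma finite_heavy_sets: "finite (heavy_sets k adjH n aG p \<epsilon>)"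
  by (rule finite_subset[of _ "Pow {1..n}"]) (auto simp: heavy_sets_def)

definition heavy_subsets :: "nat \<Rightarrow> (nat \<Rightarrow> nat \<Rightarrow> bool) \<Rightarrow> nat \<Rightarrow> (nat \<Rightarrow> nat \<Rightarrow> bool) \<Rightarrow>
    real \<Rightarrow> real \<Rightarrow> (nat \<Rightarrow> nat) \<Rightarrow> nat set set"
  where "heavy_subsets k adjH n aG p \<epsilon> s = {A \<in> heavy_sets k adjH n aG p \<epsilon>. A \<subseteq> s ` {0..<k}}"

lemma Mn_eq_sum_heavy_sets:
  "Mn k adjH n aG p \<epsilon> = (\<Sum>A\<in>heavy_sets k adjH n aG p \<epsilon>. tH k adjH n aG A)"
proof -
  let ?heavy = "\<lambda>A. \<epsilon> * p ^ card A * NHG k adjH n aG < tH k adjH n aG A"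
  have fin: "finite {A. A \<subseteq> {1..n} \<and> 1 \<le> card A \<and> card A \<le> k}"
    by (rule finite_subset[of _ "Pow {1..n}"]) auto
  have "Mn k adjH n aG p \<epsilon> = (\<Sum>A | A \<subseteq> {1..n} \<and> 1 \<le> card A \<and> card A \<le> k.
      if ?heavy A then tH k adjH n aG A else 0)"
    unfolding Mn_def by (intro sum.cong) auto
  then show ?thesis
    unfolding heavy_sets_def using sum.inter_filter[OF fin, of "tH k adjH n aG" ?heavy] by simp
qed

lemma heavy_subsets_of_tuple:
  assumes "s \<in> tuples n k"
  shows "heavy_subsets k adjH n aG p \<epsilon> s =
    {A. A \<subseteq> s ` {0..<k} \<and> A \<noteq> {} \<and>
        \<epsilon> * p ^ card A * NHG k adjH n aG < tH k adjH n aG A}"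
proof -
  have s: "s ` {0..<k} \<subseteq> {1..n}" "card (s ` {0..<k}) = k"
    using assms by (auto simp: tuples_def card_image)
  have "card A \<le> k" "1 \<le> card A \<longleftrightarrow> A \<noteq> {}" if "A \<subseteq> s ` {0..<k}" for A
    using that s card_mono[OF _ that] finite_subset[OF that]
    by (auto simp: Suc_le_eq card_gt_0_iff)
  then show ?thesis
    using s(1) by (auto simp: heavy_subsets_def heavy_sets_def)
qed

lemma b_eps_of_tuple:
  assumes "s \<in> tuples n k"
  shows "b_eps k adjH n aG p \<epsilon> s = (if heavy_subsets k adjH n aG p \<epsilon> s = {} then 1 else 0)"
  unfolding heavy_subsets_of_tuple[OF assms] b_eps_def by (simp add: not_less) blast

lemma card_heavy_subsets_of_tuple_bounds:
  assumes "s \<in> tuples n k"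
  shows "1 - b_eps k adjH n aG p \<epsilon> s \<le> real (card (heavy_subsets k adjH n aG p \<epsilon> s))"
    and "real (card (heavy_subsets k adjH n aG p \<epsilon> s))
      \<le> (2 ^ k - 1) * (1 - b_eps k adjH n aG p \<epsilon> s)"
proof -
  let ?c = "real (card (heavy_subsets k adjH n aG p \<epsilon> s))"
  have "card (s ` {0..<k}) = k"
    using assms by (simp add: tuples_def card_image)
  then have "card (heavy_subsets k adjH n aG p \<epsilon> s) \<le> 2 ^ k - 1"
    unfolding heavy_subsets_of_tuple[OF assms] using card_nonempty_subsets_le[of "s ` {0..<k}"]
    by simp
  then have "?c \<le> real (2 ^ k - 1)"
    by (simp only: of_nat_le_iff)
  then have c_le: "?c \<le> 2 ^ k - 1"
    by simp
  have "b_eps k adjH n aG p \<epsilon> s = 1 \<and> ?c = 0 \<or> b_eps k adjH n aG p \<epsilon> s = 0 \<and> 1 \<le> ?c"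
  proof (cases "heavy_subsets k adjH n aG p \<epsilon> s = {}")
    case True
    then show ?thesis
      unfolding b_eps_of_tuple[OF assms] by simp
  next
    case False
    moreover have "finite (heavy_subsets k adjH n aG p \<epsilon> s)"
      using finite_heavy_sets by (simp add: heavy_subsets_def)
    ultimately show ?thesis
      unfolding b_eps_of_tuple[OF assms] by (simp add: Suc_le_eq card_gt_0_iff)
  qed
  with c_le show "1 - b_eps k adjH n aG p \<epsilon> s \<le> ?c"
    and "?c \<le> (2 ^ k - 1) * (1 - b_eps k adjH n aG p \<epsilon> s)"
    by auto
qed

lemma Mn_eq_sum_tuples:
  "Mn k adjH n aG p \<epsilon> = (1 / real (card (autH k adjH))) * (\<Sum>s\<in>tuples n k.
      MH k adjH aG s * real (card (heavy_subsets k adjH n aG p \<epsilon> s)))"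
proof -
  have "Mn k adjH n aG p \<epsilon> = (1 / real (card (autH k adjH))) *
      (\<Sum>A\<in>heavy_sets k adjH n aG p \<epsilon>.
        \<Sum>s\<in>{s \<in> tuples n k. A \<subseteq> s ` {0..<k}}. MH k adjH aG s)"
    by (simp only: Mn_eq_sum_heavy_sets tH_def sum_distrib_left)
  also have "(\<Sum>A\<in>heavy_sets k adjH n aG p \<epsilon>.
        \<Sum>s\<in>{s \<in> tuples n k. A \<subseteq> s ` {0..<k}}. MH k adjH aG s)
      = (\<Sum>s\<in>tuples n k. \<Sum>A\<in>heavy_subsets k adjH n aG p \<epsilon> s. MH k adjH aG s)"
    unfolding heavy_subsets_def using finite_heavy_sets finite_tuples by (rule sum.swap_restrict)
  finally show ?thesis
    by (simp add: mult.commute)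
qed

lemma expectation_Tplus:
  assumes "0 \<le> p" "p \<le> 1"
  shows "measure_pmf.expectation (Xlaw n p) (Tplus k adjH n aG p \<epsilon>)
    = (1 / real (card (autH k adjH))) * (\<Sum>s\<in>tuples n k. MH k adjH aG s * b_eps k adjH n aG p \<epsilon> s * p ^ k)"
proof -
  have integrable: "integrable (measure_pmf (Xlaw n p)) f" for f :: "_ \<Rightarrow> real"
    unfolding Xlaw_def
    by (intro integrable_measure_pmf_finite finite_set_pmf_Pi_pmf_bernoulli) simp
  have "measure_pmf.expectation (Xlaw n p) (Tplus k adjH n aG p \<epsilon>)
      = (1 / real (card (autH k adjH))) * (\<Sum>s\<in>tuples n k. measure_pmf.expectation (Xlaw n p)
         (\<lambda>X. (MH k adjH aG s * b_eps k adjH n aG p \<epsilon> s) * Xs k X s))"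
    unfolding Tplus_def integral_mult_right_zero
    by (subst Bochner_Integration.integral_sum) (auto intro: integrable simp: ac_simps)
  also have "\<dots> = (1 / real (card (autH k adjH))) *
      (\<Sum>s\<in>tuples n k. MH k adjH aG s * b_eps k adjH n aG p \<epsilon> s * p ^ k)"
    unfolding integral_mult_right_zero using expectation_Xs[OF _ assms] by simp
  finally show ?thesis .
qed

lemma NHG_minus_Nplus_eq:
  assumes "0 < p" "p \<le> 1"
  shows "NHG k adjH n aG - Nplus k adjH n aG p \<epsilon> = (1 / real (card (autH k adjH))) *
    (\<Sum>s\<in>tuples n k. MH k adjH aG s * (1 - b_eps k adjH n aG p \<epsilon> s))"
  using assms unfolding NHG_def Nplus_def expectation_Tplus[OF less_imp_le[OF assms(1)] assms(2)]
  by (simp add: sum_distrib_right[symmetric] right_diff_distrib sum_subtractf)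

lemma NHG_minus_Nplus_le_Mn:
  assumes "0 < p" "p \<le> 1"
  shows "NHG k adjH n aG - Nplus k adjH n aG p \<epsilon> \<le> Mn k adjH n aG p \<epsilon>"
proof -
  have "MH k adjH aG s * (1 - b_eps k adjH n aG p \<epsilon> s)
      \<le> MH k adjH aG s * real (card (heavy_subsets k adjH n aG p \<epsilon> s))"
    if "s \<in> tuples n k" for s
    using card_heavy_subsets_of_tuple_bounds(1)[OF that] MH_nonneg by (rule mult_left_mono)
  then show ?thesis
    unfolding NHG_minus_Nplus_eq[OF assms] Mn_eq_sum_tuples by (intro mult_left_mono[OF sum_mono]) auto
qed

lemma Mn_le_NHG_minus_Nplus:
  assumes "0 < p" "p \<le> 1"
  shows "Mn k adjH n aG p \<epsilon> \<le> (2 ^ k - 1) * (NHG k adjH n aG - Nplus k adjH n aG p \<epsilon>)"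
proof -
  have "MH k adjH aG s * real (card (heavy_subsets k adjH n aG p \<epsilon> s))
      \<le> (2 ^ k - 1) * (MH k adjH aG s * (1 - b_eps k adjH n aG p \<epsilon> s))"
    if "s \<in> tuples n k" for s
    using mult_left_mono[OF card_heavy_subsets_of_tuple_bounds(2)[OF that] MH_nonneg]
    by (simp only: mult.left_commute)
  then have "(\<Sum>s\<in>tuples n k. MH k adjH aG s * real (card (heavy_subsets k adjH n aG p \<epsilon> s)))
      \<le> (2 ^ k - 1) * (\<Sum>s\<in>tuples n k. MH k adjH aG s * (1 - b_eps k adjH n aG p \<epsilon> s))"
    unfolding sum_distrib_left by (rule sum_mono)
  then show ?thesis
    unfolding NHG_minus_Nplus_eq[OF assms] Mn_eq_sum_tuples mult.left_commute[of "2 ^ k - 1"]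
    by (rule mult_left_mono) simp
qed

lemma THG_ne_Tplus_imp_heavy_set_present:
  assumes "THG k adjH n aG X \<noteq> Tplus k adjH n aG p \<epsilon> X"
  shows "\<exists>A\<in>heavy_sets k adjH n aG p \<epsilon>. \<forall>v\<in>A. X v"
proof -
  have "(\<Sum>s\<in>tuples n k. MH k adjH aG s * Xs k X s)
      \<noteq> (\<Sum>s\<in>tuples n k. MH k adjH aG s * Xs k X s * b_eps k adjH n aG p \<epsilon> s)"
    using assms unfolding THG_def Tplus_def by auto
  then obtain s where s: "s \<in> tuples n k"
    and ne: "MH k adjH aG s * Xs k X s \<noteq> MH k adjH aG s * Xs k X s * b_eps k adjH n aG p \<epsilon> s"
    by (meson sum.cong)
  from ne have "Xs k X s \<noteq> 0"
    by auto
  then have present: "\<forall>u<k. X (s u)"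
    by (simp add: Xs_eq_indicator indicator_def split: if_splits)
  from ne have "b_eps k adjH n aG p \<epsilon> s \<noteq> 1"
    by auto
  then have "heavy_subsets k adjH n aG p \<epsilon> s \<noteq> {}"
    by (simp add: b_eps_of_tuple[OF s] split: if_splits)
  then obtain A where A: "A \<in> heavy_sets k adjH n aG p \<epsilon>" "A \<subseteq> s ` {0..<k}"
    by (auto simp: heavy_subsets_def)
  with present have "\<forall>v\<in>A. X v"
    by auto
  with A(1) show ?thesis
    by blast
qed

lemma prob_THG_ne_Tplus_le:
  assumes "0 \<le> p" "p \<le> 1"
  shows "measure_pmf.prob (Xlaw n p) {X. THG k adjH n aG X \<noteq> Tplus k adjH n aG p \<epsilon> X}
    \<le> (\<Sum>A\<in>heavy_sets k adjH n aG p \<epsilon>. p ^ card A)"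
proof -
  have "measure_pmf.prob (Xlaw n p) {X. THG k adjH n aG X \<noteq> Tplus k adjH n aG p \<epsilon> X}
      \<le> measure_pmf.prob (Xlaw n p) (\<Union>A\<in>heavy_sets k adjH n aG p \<epsilon>. {X. \<forall>v\<in>A. X v})"
    using THG_ne_Tplus_imp_heavy_set_present by (intro measure_pmf.finite_measure_mono) auto
  also have "\<dots> \<le> (\<Sum>A\<in>heavy_sets k adjH n aG p \<epsilon>. measure_pmf.prob (Xlaw n p) {X. \<forall>v\<in>A. X v})"
    using finite_heavy_sets by (rule measure_pmf.finite_measure_subadditive_finite) simp
  also have "\<dots> = (\<Sum>A\<in>heavy_sets k adjH n aG p \<epsilon>. p ^ card A)"
    unfolding Xlaw_def using assms
    by (intro sum.cong refl prob_Pi_pmf_bernoulli_all_True) (auto simp: heavy_sets_def)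
  finally show ?thesis .
qed

theorem lemma3p1:
  fixes k n :: nat and adjH aG :: "nat \<Rightarrow> nat \<Rightarrow> bool" and p \<epsilon> :: real
  assumes "simple_graph_on {0..<k} adjH" and "connected_graph k adjH"
    and "simple_graph_on {1..n} aG"
    and "NHG k adjH n aG > 0"
    and "0 < p" and "p < 1" and "\<epsilon> > 0"
  shows "Mn k adjH n aG p \<epsilon> / (2 ^ k - 1) \<le> NHG k adjH n aG - Nplus k adjH n aG p \<epsilon>
       \<and> NHG k adjH n aG - Nplus k adjH n aG p \<epsilon> \<le> Mn k adjH n aG p \<epsilon>
       \<and> measure_pmf.prob (Xlaw n p) {X. THG k adjH n aG X \<noteq> Tplus k adjH n aG p \<epsilon> X}
           \<le> Mn k adjH n aG p \<epsilon> / (\<epsilon> * NHG k adjH n aG)"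
proof (intro conjI)
  have "k \<ge> 1"
    using assms(2) by (simp add: connected_graph_def)
  then have "(2::real) ^ k - 1 > 0"
    by simp
  with Mn_le_NHG_minus_Nplus[OF assms(5) less_imp_le[OF assms(6)]]
  show "Mn k adjH n aG p \<epsilon> / (2 ^ k - 1) \<le> NHG k adjH n aG - Nplus k adjH n aG p \<epsilon>"
    by (simp add: divide_le_eq mult.commute)
  show "NHG k adjH n aG - Nplus k adjH n aG p \<epsilon> \<le> Mn k adjH n aG p \<epsilon>"
    using assms(5,6) by (simp add: NHG_minus_Nplus_le_Mn)
  have "measure_pmf.prob (Xlaw n p) {X. THG k adjH n aG X \<noteq> Tplus k adjH n aG p \<epsilon> X}
      \<le> (\<Sum>A\<in>heavy_sets k adjH n aG p \<epsilon>. p ^ card A)"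
    using assms(5,6) by (simp add: prob_THG_ne_Tplus_le)
  also have "\<dots> \<le> (\<Sum>A\<in>heavy_sets k adjH n aG p \<epsilon>. tH k adjH n aG A / (\<epsilon> * NHG k adjH n aG))"
    using assms(4,7) by (intro sum_mono) (auto simp: heavy_sets_def pos_le_divide_eq mult_ac)
  also have "\<dots> = Mn k adjH n aG p \<epsilon> / (\<epsilon> * NHG k adjH n aG)"
    by (simp add: Mn_eq_sum_heavy_sets sum_divide_distrib)
  finally show "measure_pmf.prob (Xlaw n p) {X. THG k adjH n aG X \<noteq> Tplus k adjH n aG p \<epsilon> X}
      \<le> Mn k adjH n aG p \<epsilon> / (\<epsilon> * NHG k adjH n aG)" .
qed

end
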